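(* Let $q\ge1$, $N=2^q$, and let $B^{(1)}=(b_{i,j})_{i,j=1}^{N-1}$ be the symmetric Toeplitz matrix with $b_{i,i}=\frac{2N}3-1$, $b_{i,j}=\frac N6-1$ if $|i-j|=1$, and $b_{i,j}=-1$ if $|i-j|\ge2$. For $k=2,\dots,q$ define $B^{(k)}=R_kB^{(k-1)}R_k^T$, where $R_k:\mathbb R^{N/2^{k-2}-1}\to\mathbb R^{N/2^{k-1}-1}$ is $(R_k\nu)_i=\nu_{2i-1}+2\nu_{2i}+\nu_{2i+1}$. Let $L_{N/2^{k-1}-1}=\mathrm{tridiag}(-1,2,-1)$ be the one-dimensional discrete Laplacian of size $(N/2^{k-1}-1)\times(N/2^{k-1}-1)$. Then for every $1\le k\le q$ the matrix $$H^{(k)}:=B^{(k)}-\frac{2^{3k-5}}{3}N\,L_{N/2^{k-1}-1}$$ is positive semi-definite. *)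

theory Defs
  imports Complex_Main
begin

text \<open>Matrices of varying size are represented as functions nat => nat => real,
  with indices ranging over {1..n} (as in the paper); entries outside are irrelevant.\<close>

type_synonym rmat = "nat \<Rightarrow> nat \<Rightarrow> real"

definition B1 :: "nat \<Rightarrow> rmat" where
  "B1 N i j = (if i = j then 2 * real N / 3 - 1
               else if i = j + 1 \<or> j = i + 1 then real N / 6 - 1
               else -1)"

definition Rcoef :: "nat \<Rightarrow> nat \<Rightarrow> real" where
  "Rcoef i a = (if a = 2*i - 1 then 1 else if a = 2*i then 2
                else if a = 2*i + 1 then 1 else 0)"

definition conjR :: "nat \<Rightarrow> rmat \<Rightarrow> rmat" where
  "conjR m B i j = (\<Sum>a\<in>{1..m}. \<Sum>b\<in>{1..m}. Rcoef i a * B a b * Rcoef j b)"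

definition msize :: "nat \<Rightarrow> nat \<Rightarrow> nat" where
  "msize N k = N div 2^(k-1) - 1"

text \<open>Bseq N j = B^(j+1).\<close>
primrec Bseq :: "nat \<Rightarrow> nat \<Rightarrow> rmat" where
  "Bseq N 0 = B1 N"
| "Bseq N (Suc j) = conjR (msize N (Suc j)) (Bseq N j)"

definition Bk :: "nat \<Rightarrow> nat \<Rightarrow> rmat" where
  "Bk N k = Bseq N (k - 1)"

definition lap :: rmat where
  "lap i j = (if i = j then 2 else if i = j + 1 \<or> j = i + 1 then -1 else 0)"

definition Hk :: "nat \<Rightarrow> nat \<Rightarrow> rmat" where
  "Hk N k i j = Bk N k i j - (2 powr (3 * real k - 5) / 3) * real N * lap i j"

definition psd :: "nat \<Rightarrow> rmat \<Rightarrow> bool" where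
  "psd n A \<longleftrightarrow> (\<forall>i\<in>{1..n}. \<forall>j\<in>{1..n}. A i j = A j i) \<and>
     (\<forall>x :: nat \<Rightarrow> real. (\<Sum>i\<in>{1..n}. \<Sum>j\<in>{1..n}. x i * A i j * x j) \<ge> 0)"

end

theory Submission
  imports Defs "HOL-Analysis.Convex"
begin

text \<open>With s = 2^(k-1), the matrix B^(k) has the closed form
  (s^3 N / 6) tridiag(1,4,1) - s^4 J, J the all-ones matrix: applying R to both sides doubles s.
  Subtracting (s^3 N / 12) L leaves (s^3 N / 4) C^T C - s^4 J, where C is the (m+1) x m matrix with
  (C x)_e = x_e + x_(e+1) (and x_0 = x_(m+1) = 0), m = N/s - 1. The entries of C x sum to 2 \<Sum> x,
  so Cauchy-Schwarz over its m + 1 entries gives 4 (\<Sum> x)^2 \<le> (m + 1) |C x|^2, which is exactly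
  s^4 (\<Sum> x)^2 \<le> (s^3 N / 4) |C x|^2 because N = s (m + 1).\<close>

definition B_closed_form :: "real \<Rightarrow> real \<Rightarrow> rmat" where
  "B_closed_form N s i j =
     s^3 * N * (if i = j then 2/3 else if i = j + 1 \<or> j = i + 1 then 1/6 else 0) - s^4"

lemma sum_Rcoef_mult:
  assumes "1 \<le> i" "2*i + 1 \<le> m"
  shows "(\<Sum>a\<in>{1..m}. Rcoef i a * g a) = g (2*i - 1) + 2 * g (2*i) + g (2*i + 1)"
proof -
  have stencil: "2*i - 1 \<in> {1..m}" "2*i \<in> {1..m}" "2*i + 1 \<in> {1..m}"
    using assms by auto
  have "(\<Sum>a\<in>{1..m}. Rcoef i a * g a) =
        (\<Sum>a\<in>{1..m}. (if a = 2*i - 1 then g (2*i - 1) else 0) + (if a = 2*i then 2 * g (2*i) else 0)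
          + (if a = 2*i + 1 then g (2*i + 1) else 0))"
    using assms by (intro sum.cong) (auto simp: Rcoef_def)
  also have "\<dots> = g (2*i - 1) + 2 * g (2*i) + g (2*i + 1)"
    using stencil by (simp add: sum.distrib del: atLeastAtMost_iff)
  finally show ?thesis .
qed

lemma conjR_cong:
  assumes "\<And>a b. a \<in> {1..m} \<Longrightarrow> b \<in> {1..m} \<Longrightarrow> A a b = B a b"
  shows "conjR m A = conjR m B"
  using assms by (auto simp: conjR_def fun_eq_iff intro!: sum.cong)

lemma conjR_B_closed_form:
  assumes "i \<in> {1..m}" "j \<in> {1..m}"
  shows "conjR (2*m + 1) (B_closed_form N s) i j = B_closed_form N (2*s) i j"
proof -
  let ?B = "B_closed_form N s"
  have "conjR (2*m + 1) ?B i j =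
        (\<Sum>a\<in>{1..2*m + 1}. Rcoef i a * (\<Sum>b\<in>{1..2*m + 1}. Rcoef j b * ?B a b))"
    unfolding conjR_def sum_distrib_left by (intro sum.cong refl) (simp add: ac_simps)
  also have "\<dots> = (\<Sum>a\<in>{1..2*m + 1}. Rcoef i a *
                    (?B a (2*j - 1) + 2 * ?B a (2*j) + ?B a (2*j + 1)))"
    using assms by (subst sum_Rcoef_mult[of j]) auto
  also have "\<dots> = (?B (2*i-1) (2*j-1) + 2 * ?B (2*i-1) (2*j) + ?B (2*i-1) (2*j+1))
     + 2 * (?B (2*i) (2*j-1) + 2 * ?B (2*i) (2*j) + ?B (2*i) (2*j+1))
     + (?B (2*i+1) (2*j-1) + 2 * ?B (2*i+1) (2*j) + ?B (2*i+1) (2*j+1))"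
    using assms by (subst sum_Rcoef_mult) auto
  also have "\<dots> = B_closed_form N (2*s) i j"
  proof -
    consider "i = j" | "i = j + 1" | "j = i + 1" | "i \<ge> j + 2" | "j \<ge> i + 2" by linarith
    then show ?thesis
      using assms by cases (auto simp: B_closed_form_def field_simps)
  qed
  finally show ?thesis .
qed

lemma msize_pow2:
  assumes "j \<le> q"
  shows "msize (2^q) (Suc j) + 1 = 2^(q - j)"
proof -
  have "(2::nat)^q div 2^j = 2^(q - j)"
    using assms by (simp add: power_diff)
  then show ?thesis by (simp add: msize_def)
qed

lemma Bseq_eq_B_closed_form:
  assumes "j < q" "a \<in> {1..msize (2^q) (Suc j)}" "b \<in> {1..msize (2^q) (Suc j)}"
  shows "Bseq (2^q) j a b = B_closed_form (2^q) (2^j) a b"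
  using assms
proof (induction j arbitrary: a b)
  case 0
  then show ?case by (simp add: B1_def B_closed_form_def)
next
  case (Suc j)
  define m where "m = msize (2^q) (Suc (Suc j))"
  have "msize (2^q) (Suc j) + 1 = 2 * (m + 1)"
    using Suc.prems(1) msize_pow2[of j q] msize_pow2[of "Suc j" q]
    by (simp add: m_def Suc_diff_Suc power_Suc[symmetric] del: power_Suc)
  then have size: "msize (2^q) (Suc j) = 2*m + 1" by simp
  have "conjR (2*m + 1) (Bseq (2^q) j) = conjR (2*m + 1) (B_closed_form (2^q) (2^j))"
    using Suc.IH Suc.prems(1) by (intro conjR_cong) (simp add: size)
  then have "Bseq (2^q) (Suc j) a b = conjR (2*m + 1) (B_closed_form (2^q) (2^j)) a b"
    by (simp add: size)
  also have "\<dots> = B_closed_form (2^q) (2^Suc j) a b"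
    using Suc.prems(2,3) conjR_B_closed_form[of a m b] by (simp add: m_def)
  finally show ?case .
qed

text \<open>The entry (e, i) of the matrix C.\<close>
definition bidiag :: "nat \<Rightarrow> nat \<Rightarrow> real" where
  "bidiag e i = (if e = i \<or> e + 1 = i then 1 else 0)"

lemma sum_bidiag_mult_bidiag:
  assumes "i \<in> {1..m}" "j \<in> {1..m}"
  shows "(\<Sum>e\<in>{0..m}. bidiag e i * bidiag e j) =
         (if i = j then 2 else if i = j + 1 \<or> j = i + 1 then 1 else 0)"
proof -
  have "(\<Sum>e\<in>{0..m}. bidiag e i * bidiag e j) =
        (\<Sum>e\<in>{0..m}. (if e = i then bidiag i j else 0) + (if e = i - 1 then bidiag (i - 1) j else 0))"
    using assms by (intro sum.cong) (auto simp: bidiag_def)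
  also have "\<dots> = bidiag i j + bidiag (i - 1) j"
    using assms by (simp add: sum.distrib, linarith)
  finally show ?thesis
    using assms by (auto simp: bidiag_def)
qed

lemma sum_bidiag:
  assumes "i \<in> {1..m}"
  shows "(\<Sum>e\<in>{0..m}. bidiag e i) = 2"
proof -
  have "(\<Sum>e\<in>{0..m}. bidiag e i) = (\<Sum>e\<in>{0..m}. (if e = i then 1 else 0) + (if e = i - 1 then 1 else 0))"
    using assms by (intro sum.cong) (auto simp: bidiag_def)
  then show ?thesis
    using assms by (simp add: sum.distrib, linarith)
qed

lemma quadratic_form_gram_minus_const:
  fixes x :: "nat \<Rightarrow> real"
  shows "(\<Sum>i\<in>I. \<Sum>j\<in>I. x i * (\<alpha> * (\<Sum>e\<in>E. c e i * c e j) - \<beta>) * x j)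
       = \<alpha> * (\<Sum>e\<in>E. (\<Sum>i\<in>I. c e i * x i)^2) - \<beta> * (\<Sum>i\<in>I. x i)^2"
proof -
  have "(\<Sum>e\<in>E. (\<Sum>i\<in>I. c e i * x i)^2) = (\<Sum>e\<in>E. \<Sum>i\<in>I. \<Sum>j\<in>I. (c e i * x i) * (c e j * x j))"
    by (simp add: power2_eq_square sum_product)
  also have "\<dots> = (\<Sum>i\<in>I. \<Sum>j\<in>I. \<Sum>e\<in>E. (c e i * x i) * (c e j * x j))"
    by (subst sum.swap) (simp add: sum.swap[of _ E])
  finally have "(\<Sum>e\<in>E. (\<Sum>i\<in>I. c e i * x i)^2) = (\<Sum>i\<in>I. \<Sum>j\<in>I. \<Sum>e\<in>E. (c e i * x i) * (c e j * x j))" .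
  moreover have "(\<Sum>i\<in>I. x i)^2 = (\<Sum>i\<in>I. \<Sum>j\<in>I. x i * x j)"
    by (simp add: power2_eq_square sum_product)
  ultimately show ?thesis
    by (simp add: sum_subtractf sum_distrib_left sum_distrib_right algebra_simps)
qed

lemma psd_gram_minus_const:
  fixes c :: "'e \<Rightarrow> nat \<Rightarrow> real"
  assumes entries: "\<And>i j. i \<in> {1..n} \<Longrightarrow> j \<in> {1..n} \<Longrightarrow> A i j = \<alpha> * (\<Sum>e\<in>E. c e i * c e j) - \<beta>"
    and column_sums: "\<And>i. i \<in> {1..n} \<Longrightarrow> (\<Sum>e\<in>E. c e i) = d"
    and "d \<noteq> 0" "\<beta> \<ge> 0" "\<beta> * card E \<le> \<alpha> * d^2"
  shows "psd n A"
  unfolding psd_def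
proof (intro conjI ballI allI)
  fix i j assume "i \<in> {1..n}" "j \<in> {1..n}"
  then show "A i j = A j i"
    by (simp add: entries mult.commute)
next
  fix x :: "nat \<Rightarrow> real"
  define z where "z e = (\<Sum>i\<in>{1..n}. c e i * x i)" for e
  have "(\<Sum>e\<in>E. z e) = (\<Sum>i\<in>{1..n}. \<Sum>e\<in>E. c e i * x i)"
    unfolding z_def by (rule sum.swap)
  also have "\<dots> = d * (\<Sum>i\<in>{1..n}. x i)"
    by (simp add: sum_distrib_left flip: sum_distrib_right column_sums)
  finally have "(d * (\<Sum>i\<in>{1..n}. x i))^2 \<le> (\<Sum>e\<in>E. (z e)^2) * card E"
    using sum_squared_le_sum_of_squares[of z E] by simp
  then have "d^2 * (\<beta> * (\<Sum>i\<in>{1..n}. x i)^2) \<le> \<beta> * card E * (\<Sum>e\<in>E. (z e)^2)"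
    using \<open>\<beta> \<ge> 0\<close> by (simp add: power_mult_distrib mult_left_mono algebra_simps)
  also have "\<dots> \<le> \<alpha> * d^2 * (\<Sum>e\<in>E. (z e)^2)"
    using \<open>\<beta> * card E \<le> \<alpha> * d^2\<close> by (intro mult_right_mono sum_nonneg) auto
  finally have "d^2 * (\<beta> * (\<Sum>i\<in>{1..n}. x i)^2) \<le> d^2 * (\<alpha> * (\<Sum>e\<in>E. (z e)^2))"
    by (simp only: ac_simps)
  then have "\<beta> * (\<Sum>i\<in>{1..n}. x i)^2 \<le> \<alpha> * (\<Sum>e\<in>E. (z e)^2)"
    using \<open>d \<noteq> 0\<close> by simp
  moreover have "(\<Sum>i\<in>{1..n}. \<Sum>j\<in>{1..n}. x i * A i j * x j) =
      (\<Sum>i\<in>{1..n}. \<Sum>j\<in>{1..n}. x i * (\<alpha> * (\<Sum>e\<in>E. c e i * c e j) - \<beta>) * x j)"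
    by (intro sum.cong refl) (simp add: entries)
  ultimately show "(\<Sum>i\<in>{1..n}. \<Sum>j\<in>{1..n}. x i * A i j * x j) \<ge> 0"
    by (simp add: z_def quadratic_form_gram_minus_const)
qed

lemma two_powr_3k_minus_5:
  assumes "1 \<le> k"
  shows "(2::real) powr (3 * real k - 5) = (2^(k - 1))^3 / 4"
proof -
  obtain j where k: "k = Suc j" using assms by (cases k) auto
  have "3 * real k - 5 = real (3 * j) - 2"
    by (simp add: k algebra_simps)
  then have "(2::real) powr (3 * real k - 5) = 2 powr real (3 * j) / 2 powr 2"
    by (simp only: powr_diff)
  also have "\<dots> = 2^(3 * j) / 4"
    by (simp add: powr_realpow[of 2 "3 * j", symmetric])
  finally show ?thesis
    by (simp add: k power_mult mult.commute)
qed

lemma Hk_eq_gram_minus_const: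
  assumes "1 \<le> k" "k \<le> q" "i \<in> {1..msize (2^q) k}" "j \<in> {1..msize (2^q) k}"
  shows "Hk (2^q) k i j = (2^(k - 1))^3 * 2^q / 4 * (\<Sum>e\<in>{0..msize (2^q) k}. bidiag e i * bidiag e j)
                          - (2^(k - 1))^4"
proof -
  have "Bk (2^q) k i j = B_closed_form (2^q) (2^(k - 1)) i j"
    using assms Bseq_eq_B_closed_form[of "k - 1" q i j] by (simp add: Bk_def)
  then have "Hk (2^q) k i j = B_closed_form (2^q) (2^(k - 1)) i j - (2^(k - 1))^3 / 12 * 2^q * lap i j"
    unfolding Hk_def two_powr_3k_minus_5[OF assms(1)] by simp
  also have "\<dots> = (2^(k - 1))^3 * 2^q / 4 * (\<Sum>e\<in>{0..msize (2^q) k}. bidiag e i * bidiag e j)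
                   - (2^(k - 1))^4"
    using assms(3,4) by (simp add: sum_bidiag_mult_bidiag B_closed_form_def lap_def)
  finally show ?thesis .
qed

theorem lemma4p7:
  fixes q k N :: nat
  assumes "q \<ge> 1" and "N = 2 ^ q" and "1 \<le> k" and "k \<le> q"
  shows "psd (msize N k) (Hk N k)"
proof -
  define s :: real where "s = 2^(k - 1)"
  define m where "m = msize N k"
  have "m + 1 = 2^(q - (k - 1))"
    using assms msize_pow2[of "k - 1" q] by (simp add: m_def)
  then have "N = 2^(k - 1) * (m + 1)"
    using assms by (simp flip: power_add)
  then have N: "real N = s * (real m + 1)"
    by (simp add: s_def algebra_simps)
  show ?thesis
    unfolding m_def[symmetric]
  proof (rule psd_gram_minus_const)
    show "Hk N k i j = s^3 * N / 4 * (\<Sum>e\<in>{0..m}. bidiag e i * bidiag e j) - s^4"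
      if "i \<in> {1..m}" "j \<in> {1..m}" for i j
      using Hk_eq_gram_minus_const[of k q i j] that assms by (simp add: m_def s_def)
    show "(\<Sum>e\<in>{0..m}. bidiag e i) = 2" if "i \<in> {1..m}" for i
      using that by (rule sum_bidiag)
    show "s^4 * card {0..m} \<le> s^3 * N / 4 * 2^2"
      by (simp add: N power4_eq_xxxx power3_eq_cube algebra_simps)
  qed (simp_all add: s_def)
qed

end
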